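(* Fix $\varepsilon\in(0,\tfrac12)$, let $m=m(n)$ and $p=p(n)\in(\varepsilon,1-\varepsilon)$, let $N_E$ be the number of edges of $\mathcal G(n,m,p)$, $\widetilde N_E=(N_E-\mathbb E[N_E])/\sqrt{\operatorname{Var}[N_E]}$ and $\mathcal N\sim\mathcal N(0,1)$. Then: (1) if $m/\ln n\to0$, then $\widetilde N_E\xrightarrow{\mathcal D}\mathcal N$; (2) if $m/\ln n\to\infty$, then $\widetilde N_E$ does not converge in distribution to $\mathcal N$.
   Context: Random intersection graph $\mathcal G(n,m,p)$: vertices $v_1,\ldots,v_n$, attributes $a_1,\ldots,a_m$; each vertex chooses each attribute independently with probability $p$; two vertices are adjacent iff they chose at least one common attribute. Limits are as $n\to\infty$. *)

theory Defs
  imports "HOL-Probability.Probability"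
begin

text \<open>Random intersection graph G(n,m,p): a sample is the incidence relation
  S (i,a) = "vertex i chose attribute a", for i < n, a < m, each pair independently
  with probability p (entries outside the index range are fixed to False).\<close>
definition rig :: "nat \<Rightarrow> nat \<Rightarrow> real \<Rightarrow> (nat \<times> nat \<Rightarrow> bool) pmf" where
  "rig n m p = Pi_pmf ({..<n} \<times> {..<m}) False (\<lambda>_. bernoulli_pmf p)"

definition num_edges :: "nat \<Rightarrow> nat \<Rightarrow> (nat \<times> nat \<Rightarrow> bool) \<Rightarrow> nat" where
  "num_edges n m S = card {(i, j). i < j \<and> j < n \<and> (\<exists>a<m. S (i, a) \<and> S (j, a))}"

definition edges_mean :: "nat \<Rightarrow> nat \<Rightarrow> real \<Rightarrow> real" where
  "edges_mean n m p = measure_pmf.expectation (rig n m p) (\<lambda>S. real (num_edges n m S))"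

definition edges_var :: "nat \<Rightarrow> nat \<Rightarrow> real \<Rightarrow> real" where
  "edges_var n m p = measure_pmf.variance (rig n m p) (\<lambda>S. real (num_edges n m S))"

definition std_edges_distr :: "nat \<Rightarrow> nat \<Rightarrow> real \<Rightarrow> real measure" where
  "std_edges_distr n m p =
     measure_pmf (map_pmf (\<lambda>S. (real (num_edges n m S) - edges_mean n m p) / sqrt (edges_var n m p))
                  (rig n m p))"

end

theory Submission
  imports Defs "HOL-Real_Asymp.Real_Asymp"
begin

text \<open>
  Encode vertex i by its attribute set X i. The X i are i.i.d., and the edge count is the
  U-statistic \<Sum>i<j. f (X i) (X j) for the kernel f x y = [x and y meet]. Hoeffding's decomposition
  splits its centred version into the linear part (n - 1) \<Sum>i. h1 (X i), of variance
  (n - 1)^2 n var_h1, and a degenerate part of variance at most 2 n (n - 1); for the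
  intersection kernel var_h1 \<ge> \<epsilon>^(m + 3).

  If m / ln n \<longrightarrow> 0 then n var_h1 \<longrightarrow> \<infinity>, so the degenerate part is negligible, and the
  linear part is a normalised sum of bounded i.i.d. variables whose characteristic functions
  converge to exp (- t^2 / 2); Levy's continuity theorem gives normality.

  If m / ln n \<longrightarrow> \<infinity> then the expected number of non-adjacent pairs, at most n^2 (1 - \<epsilon>^2)^m,
  tends to 0. With probability tending to 1 the graph is complete and the standardised edge
  count takes a single deterministic value, so its distribution function at 0 ends up close to
  0 or to 1, while the standard normal one is strictly in between.
\<close>

section \<open>Expectations under finite product distributions\<close>

lemma finite_set_Pi_pmf:
  assumes "finite A" "\<And>x. x \<in> A \<Longrightarrow> finite (set_pmf (p x))"
  shows "finite (set_pmf (Pi_pmf A d p))"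
  using assms by (auto simp: set_Pi_pmf intro!: finite_PiE_dflt)

lemma integral_pair_pmf_finite:
  fixes F :: "'a \<times> 'b \<Rightarrow> 'c::{banach, second_countable_topology}"
  assumes fin_A: "finite (set_pmf A)" and fin_B: "finite (set_pmf B)"
  shows "integral\<^sup>L (pair_pmf A B) F = integral\<^sup>L A (\<lambda>a. integral\<^sup>L B (\<lambda>b. F (a, b)))"
proof -
  have "integral\<^sup>L (pair_pmf A B) F = (\<Sum>z\<in>set_pmf A \<times> set_pmf B. pmf (pair_pmf A B) z *\<^sub>R F z)"
    by (rule integral_measure_pmf) (use fin_A fin_B in auto)
  also have "\<dots> = (\<Sum>a\<in>set_pmf A. pmf A a *\<^sub>R (\<Sum>b\<in>set_pmf B. pmf B b *\<^sub>R F (a, b)))"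
    unfolding sum.cartesian_product scaleR_sum_right by (intro sum.cong) (auto simp: pmf_pair)
  also have "\<dots> = integral\<^sup>L A (\<lambda>a. integral\<^sup>L B (\<lambda>b. F (a, b)))"
    by (subst (1 2) integral_measure_pmf) (use fin_A fin_B in auto)
  finally show ?thesis .
qed

lemma integral_Pi_pmf_resample:
  fixes \<Phi> :: "('i \<Rightarrow> 'a) \<Rightarrow> 'c::{banach, second_countable_topology}"
  assumes fin: "finite A" and a: "a \<in> A" and fin_D: "finite (set_pmf D)"
  shows "integral\<^sup>L (Pi_pmf A d (\<lambda>_. D)) \<Phi> =
         integral\<^sup>L (Pi_pmf A d (\<lambda>_. D)) (\<lambda>X. integral\<^sup>L D (\<lambda>y. \<Phi> (X(a := y))))"
proof -
  let ?P = "Pi_pmf A d (\<lambda>_. D)" and ?Q = "Pi_pmf (A - {a}) d (\<lambda>_. D)"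
  have fin_Q: "finite (set_pmf ?Q)" by (rule finite_set_Pi_pmf) (use fin fin_D in auto)
  have "?P = map_pmf (\<lambda>(y, f). f(a := y)) (pair_pmf D ?Q)"
    using Pi_pmf_insert[of "A - {a}" a d "\<lambda>_. D"] fin a by (simp add: insert_absorb)
  also have "\<dots> = map_pmf (\<lambda>(f, y). f(a := y)) (pair_pmf ?Q D)"
    by (subst pair_commute_pmf) (simp add: pmf.map_comp o_def case_prod_unfold)
  finally have "integral\<^sup>L ?P \<Phi> = integral\<^sup>L ?Q (\<lambda>f. integral\<^sup>L D (\<lambda>y. \<Phi> (f(a := y))))"
    by (simp add: case_prod_unfold integral_pair_pmf_finite[OF fin_Q fin_D])
  also have "\<dots> = integral\<^sup>L (map_pmf (\<lambda>f. f(a := d)) ?P) (\<lambda>f. integral\<^sup>L D (\<lambda>y. \<Phi> (f(a := y))))"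
    by (simp only: Pi_pmf_remove[OF fin])
  finally show ?thesis by simp
qed

lemma integral_Pi_pmf_component:
  fixes F :: "'a \<Rightarrow> 'c::{banach, second_countable_topology}"
  assumes "finite A" and "a \<in> A"
  shows "integral\<^sup>L (Pi_pmf A d p) (\<lambda>X. F (X a)) = integral\<^sup>L (p a) F"
proof -
  have "map_pmf (\<lambda>f. f a) (Pi_pmf A d p) = p a"
    using Pi_pmf_component[OF assms(1), of a d p] assms(2) by simp
  then show ?thesis
    by (metis integral_map_pmf)
qed

lemma integral_prod_Pi_pmf:
  fixes f :: "'i \<Rightarrow> 'a \<Rightarrow> 'c::{real_normed_field, banach, second_countable_topology}"
  assumes "finite A" "\<And>x. x \<in> A \<Longrightarrow> finite (set_pmf (p x))"
  shows "integral\<^sup>L (Pi_pmf A d p) (\<lambda>y. \<Prod>x\<in>A. f x (y x)) = (\<Prod>x\<in>A. integral\<^sup>L (p x) (f x))"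
  using assms
proof (induction rule: finite_induct)
  case (insert x A)
  have fin_Q: "finite (set_pmf (Pi_pmf A d p))" and fin_x: "finite (set_pmf (p x))"
    using insert by (auto intro!: finite_set_Pi_pmf)
  have prod_upd: "(\<Prod>z\<in>insert x A. f z ((b(x := a)) z)) = f x a * (\<Prod>z\<in>A. f z (b z))" for a b
    using insert.hyps by (auto intro!: prod.cong)
  have "integral\<^sup>L (Pi_pmf (insert x A) d p) (\<lambda>y. \<Prod>z\<in>insert x A. f z (y z)) =
        integral\<^sup>L (pair_pmf (p x) (Pi_pmf A d p)) (\<lambda>(a, b). \<Prod>z\<in>insert x A. f z ((b(x := a)) z))"
    using insert.hyps by (simp add: Pi_pmf_insert case_prod_unfold del: prod.insert fun_upd_apply)
  also have "\<dots> = integral\<^sup>L (p x) (\<lambda>a. integral\<^sup>L (Pi_pmf A d p) (\<lambda>b. f x a * (\<Prod>z\<in>A. f z (b z))))"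
    by (simp only: integral_pair_pmf_finite[OF fin_x fin_Q] prod_upd case_prod_conv)
  finally show ?case
    using insert by simp
qed simp

lemma integral_abs_le_sqrt_integral_sq:
  fixes Y :: "'a \<Rightarrow> real"
  assumes "finite (set_pmf P)"
  shows "integral\<^sup>L P (\<lambda>x. \<bar>Y x\<bar>) \<le> sqrt (integral\<^sup>L P (\<lambda>x. (Y x)^2))"
proof (rule real_le_rsqrt)
  have "0 \<le> measure_pmf.variance P (\<lambda>x. \<bar>Y x\<bar>)"
    by (rule measure_pmf.variance_positive)
  also have "\<dots> = integral\<^sup>L P (\<lambda>x. (Y x)^2) - (integral\<^sup>L P (\<lambda>x. \<bar>Y x\<bar>))^2"
    by (subst measure_pmf.variance_eq) (auto intro: integrable_measure_pmf_finite[OF assms])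
  finally show "(integral\<^sup>L P (\<lambda>x. \<bar>Y x\<bar>))^2 \<le> integral\<^sup>L P (\<lambda>x. (Y x)^2)"
    by simp
qed

section \<open>Characteristic functions of sums of independent variables\<close>

lemma norm_iexp_sub_taylor2_le:
  "cmod (iexp y - (1 + \<i> * complex_of_real y - complex_of_real (y^2 / 2))) \<le> \<bar>y\<bar>^3 / 6"
proof -
  have "cmod (iexp y - (\<Sum>k \<le> 2. (\<i> * y)^k / fact k)) \<le> \<bar>y\<bar>^(Suc 2) / fact (Suc 2)"
    by (rule iexp_approx1)
  also have "(\<Sum>k \<le> 2. (\<i> * y)^k / fact k) = 1 + \<i> * complex_of_real y - complex_of_real (y^2 / 2)"
    by (simp add: numeral_eq_Suc complex_eq_iff power2_eq_square)
  finally show ?thesis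
    by (simp add: numeral_eq_Suc)
qed

lemma norm_iexp_diff_le: "cmod (iexp a - iexp b) \<le> \<bar>a - b\<bar>"
proof -
  have "iexp a - iexp b = iexp b * (iexp (a - b) - 1)"
    by (simp add: algebra_simps flip: exp_add)
  then have "cmod (iexp a - iexp b) = cmod (iexp (a - b) - (\<Sum>k \<le> 0. (\<i> * (a - b))^k / fact k))"
    by (simp add: norm_mult)
  also have "\<dots> \<le> \<bar>a - b\<bar>^(Suc 0) / fact (Suc 0)"
    by (rule iexp_approx1)
  finally show ?thesis by simp
qed

lemma integral_iexp_taylor2_le:
  fixes h :: "'a \<Rightarrow> real"
  assumes fin: "finite (set_pmf D)" and h_le: "\<And>x. \<bar>h x\<bar> \<le> 1"
    and h_mean: "integral\<^sup>L D h = 0"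
  shows "cmod (integral\<^sup>L D (\<lambda>x. iexp (u * h x)) -
                 complex_of_real (1 - u^2 * integral\<^sup>L D (\<lambda>x. (h x)^2) / 2))
         \<le> \<bar>u\<bar>^3 * integral\<^sup>L D (\<lambda>x. (h x)^2) / 6"
proof -
  have int [simp]: "integrable D F" for F :: "'a \<Rightarrow> 'b::{banach, second_countable_topology}"
    by (rule integrable_measure_pmf_finite) (rule fin)
  let ?T = "\<lambda>x. 1 + \<i> * complex_of_real (u * h x) - complex_of_real ((u * h x)^2 / 2)"
  have "integral\<^sup>L D ?T =
          integral\<^sup>L D (\<lambda>x. complex_of_real (1 - (u^2/2) * (h x)^2) + \<i> * u * complex_of_real (h x))"
    by (simp add: power_mult_distrib algebra_simps)
  also have "\<dots> = complex_of_real (integral\<^sup>L D (\<lambda>x. 1 - (u^2/2) * (h x)^2))"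
    using h_mean by (simp only: Bochner_Integration.integral_add[OF int int] integral_complex_of_real) simp
  finally have T_mean: "integral\<^sup>L D ?T = complex_of_real (1 - u^2 * integral\<^sup>L D (\<lambda>x. (h x)^2) / 2)"
    by (simp add: measure_pmf.prob_space)
  have "cmod (integral\<^sup>L D (\<lambda>x. iexp (u * h x)) - integral\<^sup>L D ?T)
        \<le> integral\<^sup>L D (\<lambda>x. cmod (iexp (u * h x) - ?T x))"
    by (subst Bochner_Integration.integral_diff[OF int int, symmetric]) (rule integral_norm_bound)
  also have "\<dots> \<le> integral\<^sup>L D (\<lambda>x. \<bar>u\<bar>^3 * (h x)^2 / 6)"
  proof (rule integral_mono)
    fix x
    have "\<bar>h x\<bar>^3 \<le> (h x)^2"
      using h_le[of x] by (simp add: power3_eq_cube power2_eq_square mult_left_le abs_mult_self_eq)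
    then have "\<bar>u * h x\<bar>^3 \<le> \<bar>u\<bar>^3 * (h x)^2"
      by (simp add: abs_mult power_mult_distrib mult_left_mono)
    with norm_iexp_sub_taylor2_le[of "u * h x"]
    show "cmod (iexp (u * h x) - ?T x) \<le> \<bar>u\<bar>^3 * (h x)^2 / 6"
      by linarith
  qed simp_all
  also have "\<dots> = \<bar>u\<bar>^3 * integral\<^sup>L D (\<lambda>x. (h x)^2) / 6"
    by simp
  finally show ?thesis
    unfolding T_mean .
qed

lemma integral_iexp_sum_Pi_pmf:
  fixes h :: "'a \<Rightarrow> real"
  assumes "finite (set_pmf D)"
  shows "integral\<^sup>L (Pi_pmf {..<n} d (\<lambda>_. D)) (\<lambda>X. iexp (u * (\<Sum>i<n. h (X i))))
         = (integral\<^sup>L D (\<lambda>x. iexp (u * h x)))^n"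
proof -
  have "iexp (u * (\<Sum>i<n. h (X i))) = (\<Prod>i<n. iexp (u * h (X i)))" for X
  proof -
    have "iexp (u * (\<Sum>i<n. h (X i))) = exp (\<Sum>i<n. \<i> * complex_of_real (u * h (X i)))"
      by (simp add: sum_distrib_left)
    then show ?thesis
      by (simp only: exp_sum finite_lessThan)
  qed
  then show ?thesis
    using integral_prod_Pi_pmf[of "{..<n}" "\<lambda>_. D" d "\<lambda>_ x. iexp (u * h x)"] assms by simp
qed

lemma tendsto_power_exp_limit_sequentially:
  fixes z :: "nat \<Rightarrow> complex" and x :: real
  assumes le_1: "eventually (\<lambda>n. cmod (z n) \<le> 1) sequentially" and "x \<le> 0"
    and lim: "(\<lambda>n. of_nat n * (z n - 1)) \<longlonglongrightarrow> of_real x"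
  shows "(\<lambda>n. z n ^ n) \<longlonglongrightarrow> of_real (exp x)"
proof -
  define w where "w n = complex_of_real (1 + x / real n)" for n
  have "eventually (\<lambda>n. \<bar>1 + x / real n\<bar> \<le> 1) sequentially"
    using eventually_ge_at_top[of "nat \<lceil>-x\<rceil>"]
  proof eventually_elim
    case (elim n)
    then show ?case
      using \<open>x \<le> 0\<close> by (cases "n = 0") (auto simp: abs_le_iff field_simps)
  qed
  then have "eventually (\<lambda>n. cmod (w n) \<le> 1) sequentially"
    unfolding w_def norm_of_real .
  with le_1 have "eventually (\<lambda>n. cmod (z n ^ n - w n ^ n) \<le> cmod (of_nat n * (z n - 1) - x)) sequentially"
  proof eventually_elim
    case (elim n)
    have "cmod (z n ^ n - w n ^ n) \<le> real n * cmod (z n - w n)"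
      by (rule norm_power_diff) (use elim in auto)
    also have "\<dots> \<le> cmod (of_nat n * (z n - 1) - x)"
    proof (cases "n = 0")
      case False
      then have "of_nat n * (z n - w n) = of_nat n * (z n - 1) - of_real x"
        by (simp add: w_def field_simps)
      then show ?thesis
        by (metis norm_mult norm_of_nat order.refl)
    qed simp
    finally show ?case .
  qed
  moreover have "(\<lambda>n. cmod (of_nat n * (z n - 1) - x)) \<longlonglongrightarrow> 0"
    using lim by (simp add: tendsto_iff dist_norm)
  ultimately have "(\<lambda>n. z n ^ n - w n ^ n) \<longlonglongrightarrow> 0"
    by (rule Lim_null_comparison)
  moreover have "(\<lambda>n. w n ^ n) \<longlonglongrightarrow> of_real (exp x)"
    unfolding w_def of_real_power[symmetric] by (intro tendsto_of_real tendsto_exp_limit_sequentially)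
  ultimately show ?thesis
    using tendsto_add by fastforce
qed

lemma norm_integral_iexp_le_1:
  fixes D :: "'a pmf"
  shows "cmod (integral\<^sup>L D (\<lambda>x. iexp (f x))) \<le> 1"
proof -
  have "cmod (integral\<^sup>L D (\<lambda>x. iexp (f x))) \<le> integral\<^sup>L D (\<lambda>x. cmod (iexp (f x)))"
    by (rule integral_norm_bound)
  then show ?thesis
    by (simp add: measure_pmf.prob_space)
qed

lemma scaled_integral_iexp_sub_1_tendsto:
  fixes D :: "nat \<Rightarrow> 'a pmf" and h :: "nat \<Rightarrow> 'a \<Rightarrow> real" and u :: "nat \<Rightarrow> real"
  assumes fin: "\<And>n. finite (set_pmf (D n))" and h_le: "\<And>n x. \<bar>h n x\<bar> \<le> 1"
    and h_mean: "\<And>n. integral\<^sup>L (D n) (h n) = 0"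
    and var_lim: "(\<lambda>n. real n * (u n)^2 * integral\<^sup>L (D n) (\<lambda>x. (h n x)^2)) \<longlonglongrightarrow> v"
    and u_lim: "u \<longlonglongrightarrow> 0"
  shows "(\<lambda>n. of_nat n * (integral\<^sup>L (D n) (\<lambda>x. iexp (u n * h n x)) - 1)) \<longlonglongrightarrow> - of_real (v / 2)"
proof -
  define s where "s n = integral\<^sup>L (D n) (\<lambda>x. (h n x)^2)" for n
  define \<phi> where "\<phi> n = integral\<^sup>L (D n) (\<lambda>x. iexp (u n * h n x))" for n
  have taylor: "cmod (of_nat n * (\<phi> n - 1) + of_real (real n * (u n)^2 * s n / 2))
                \<le> real n * (u n)^2 * s n * \<bar>u n\<bar> / 6" for n
  proof -
    have "of_nat n * (\<phi> n - 1) + of_real (real n * (u n)^2 * s n / 2) =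
          of_nat n * (\<phi> n - of_real (1 - (u n)^2 * s n / 2))"
      by (simp add: algebra_simps)
    also have "cmod \<dots> \<le> real n * (\<bar>u n\<bar>^3 * s n / 6)"
      unfolding norm_mult norm_of_nat \<phi>_def s_def
      by (intro mult_left_mono integral_iexp_taylor2_le fin h_le h_mean) simp
    finally show ?thesis
      by (simp add: power2_eq_square power3_eq_cube abs_mult_self_eq mult_ac)
  qed
  have var_lim': "(\<lambda>n. real n * (u n)^2 * s n) \<longlonglongrightarrow> v"
    using var_lim by (simp add: s_def)
  have "(\<lambda>n. real n * (u n)^2 * s n * \<bar>u n\<bar>) \<longlonglongrightarrow> v * 0"
    using var_lim' tendsto_rabs_zero[OF u_lim] by (rule tendsto_mult)
  then have "(\<lambda>n. real n * (u n)^2 * s n * \<bar>u n\<bar> / 6) \<longlonglongrightarrow> 0"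
    by (simp add: tendsto_divide_zero)
  then have "(\<lambda>n. of_nat n * (\<phi> n - 1) + of_real (real n * (u n)^2 * s n / 2)) \<longlonglongrightarrow> 0"
    by (intro Lim_null_comparison[OF always_eventually[OF allI[OF taylor]]]) simp
  moreover have "(\<lambda>n. complex_of_real (real n * (u n)^2 * s n / 2)) \<longlonglongrightarrow> of_real (v / 2)"
    using var_lim' by (intro tendsto_of_real tendsto_divide tendsto_const) simp_all
  ultimately have "(\<lambda>n. of_nat n * (\<phi> n - 1)) \<longlonglongrightarrow> 0 - of_real (v / 2)"
    by (rule tendsto_diff[THEN Lim_transform_eventually]) simp
  then show ?thesis
    by (simp add: \<phi>_def)
qed

lemma tendsto_integral_iexp_sum_iid:
  fixes D :: "nat \<Rightarrow> 'a pmf" and h :: "nat \<Rightarrow> 'a \<Rightarrow> real" and u :: "nat \<Rightarrow> real"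
  assumes fin: "\<And>n. finite (set_pmf (D n))" and h_le: "\<And>n x. \<bar>h n x\<bar> \<le> 1"
    and h_mean: "\<And>n. integral\<^sup>L (D n) (h n) = 0"
    and var_lim: "(\<lambda>n. real n * (u n)^2 * integral\<^sup>L (D n) (\<lambda>x. (h n x)^2)) \<longlonglongrightarrow> v"
    and u_lim: "u \<longlonglongrightarrow> 0"
  shows "(\<lambda>n. integral\<^sup>L (Pi_pmf {..<n} d (\<lambda>_. D n)) (\<lambda>X. iexp (u n * (\<Sum>i<n. h n (X i)))))
         \<longlonglongrightarrow> exp (- v / 2)"
proof -
  have "v \<ge> 0"
    using var_lim by (rule LIMSEQ_le_const) (auto intro!: Bochner_Integration.integral_nonneg)
  then have "(\<lambda>n. integral\<^sup>L (D n) (\<lambda>x. iexp (u n * h n x)) ^ n) \<longlonglongrightarrow> of_real (exp (- (v / 2)))"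
    using scaled_integral_iexp_sub_1_tendsto[OF assms]
    by (intro tendsto_power_exp_limit_sequentially norm_integral_iexp_le_1 always_eventually allI) auto
  then show ?thesis
    by (simp only: integral_iexp_sum_Pi_pmf[OF fin] minus_divide_left)
qed

section \<open>The Hoeffding decomposition of a U-statistic\<close>

definition pairs_below :: "nat \<Rightarrow> (nat \<times> nat) set" where
  "pairs_below n = {(i, j). i < j \<and> j < n}"

lemma finite_pairs_below [simp]: "finite (pairs_below n)"
  by (rule finite_subset[of _ "{..<n} \<times> {..<n}"]) (auto simp: pairs_below_def)

lemma pairs_below_Suc: "pairs_below (Suc n) = pairs_below n \<union> (\<lambda>i. (i, n)) ` {..<n}"
  by (auto simp: pairs_below_def less_Suc_eq)

lemma sum_pairs_below_add:
  fixes a :: "nat \<Rightarrow> real"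
  shows "(\<Sum>(i, j)\<in>pairs_below n. a i + a j) = (real n - 1) * (\<Sum>i<n. a i)"
proof (induction n)
  case 0
  then show ?case by (simp add: pairs_below_def)
next
  case (Suc n)
  have "pairs_below n \<inter> (\<lambda>i. (i, n)) ` {..<n} = {}"
    by (auto simp: pairs_below_def)
  then have "(\<Sum>(i, j)\<in>pairs_below (Suc n). a i + a j) =
             (\<Sum>(i, j)\<in>pairs_below n. a i + a j) + (\<Sum>i<n. a i + a n)"
    unfolding pairs_below_Suc by (subst sum.union_disjoint) (auto simp: sum.reindex inj_on_def)
  then show ?case
    using Suc by (simp add: sum.distrib algebra_simps)
qed

lemma card_pairs_below: "real (card (pairs_below n)) = real n * (real n - 1) / 2"
  using sum_pairs_below_add[of "\<lambda>_. 1/2" n] by simp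

lemma card_pairs_below_le: "real (card (pairs_below n)) \<le> real n ^ 2"
proof -
  have "real n * (real n - 1) \<le> real n * (2 * real n)"
    by (intro mult_left_mono) auto
  then show ?thesis
    unfolding card_pairs_below by (simp add: power2_eq_square)
qed

locale u_statistic =
  fixes D :: "'a pmf" and f :: "'a \<Rightarrow> 'a \<Rightarrow> real" and d :: 'a
  assumes finite_D: "finite (set_pmf D)"
    and f_commute: "f x y = f y x"
    and f_nonneg: "0 \<le> f x y" and f_le_1: "f x y \<le> 1"
begin

definition sample :: "nat \<Rightarrow> (nat \<Rightarrow> 'a) pmf" where
  "sample n = Pi_pmf {..<n} d (\<lambda>_. D)"

definition proj :: "'a \<Rightarrow> real" where "proj x = integral\<^sup>L D (f x)"
definition theta :: real where "theta = integral\<^sup>L D proj"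
definition h1 :: "'a \<Rightarrow> real" where "h1 x = proj x - theta"
definition h2 :: "'a \<Rightarrow> 'a \<Rightarrow> real" where "h2 x y = f x y - h1 x - h1 y - theta"
definition var_h1 :: real where "var_h1 = integral\<^sup>L D (\<lambda>x. (h1 x)^2)"

definition ustat :: "nat \<Rightarrow> (nat \<Rightarrow> 'a) \<Rightarrow> real" where
  "ustat n X = (\<Sum>(i, j)\<in>pairs_below n. f (X i) (X j))"
definition lin_part :: "nat \<Rightarrow> (nat \<Rightarrow> 'a) \<Rightarrow> real" where
  "lin_part n X = (real n - 1) * (\<Sum>i<n. h1 (X i))"
definition deg_part :: "nat \<Rightarrow> (nat \<Rightarrow> 'a) \<Rightarrow> real" where
  "deg_part n X = (\<Sum>(i, j)\<in>pairs_below n. h2 (X i) (X j))"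

lemma finite_set_sample: "finite (set_pmf (sample n))"
  unfolding sample_def by (rule finite_set_Pi_pmf) (auto simp: finite_D)

lemma integrable_D [simp]: "integrable D (F :: 'a \<Rightarrow> 'b::{banach, second_countable_topology})"
  by (rule integrable_measure_pmf_finite) (rule finite_D)

lemma integrable_sample [simp]:
  "integrable (sample n) (F :: _ \<Rightarrow> 'b::{banach, second_countable_topology})"
  by (rule integrable_measure_pmf_finite) (rule finite_set_sample)

lemma proj_bounds: "0 \<le> proj x" "proj x \<le> 1"
  unfolding proj_def
  by (auto intro!: measure_pmf.integral_ge_const measure_pmf.integral_le_const f_nonneg f_le_1)

lemma theta_bounds: "0 \<le> theta" "theta \<le> 1"
  unfolding theta_def
  by (auto intro!: measure_pmf.integral_ge_const measure_pmf.integral_le_const proj_bounds)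

lemma abs_h1_le_1: "\<bar>h1 x\<bar> \<le> 1"
  unfolding h1_def using proj_bounds[of x] theta_bounds by auto

lemma integral_h1: "integral\<^sup>L D h1 = 0"
  unfolding h1_def by (simp add: theta_def)

lemma h2_commute: "h2 x y = h2 y x"
  unfolding h2_def by (simp add: f_commute)

lemma integral_h2: "integral\<^sup>L D (h2 x) = 0"
proof -
  have "integral\<^sup>L D (h2 x) = proj x - h1 x - integral\<^sup>L D h1 - theta"
    unfolding h2_def proj_def by simp
  then show ?thesis
    by (simp add: integral_h1 h1_def)
qed

lemma h2_sq_le_4: "(h2 x y)^2 \<le> 4"
proof -
  have "\<bar>h2 x y\<bar> \<le> 2"
    unfolding h2_def h1_def using proj_bounds[of x] proj_bounds[of y] theta_bounds f_nonneg[of x y] f_le_1[of x y]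
    by auto
  then have "\<bar>h2 x y\<bar>^2 \<le> 2^2"
    by (intro power_mono) auto
  then show ?thesis
    by simp
qed

lemma integral_sample_resample:
  fixes \<Phi> :: "(nat \<Rightarrow> 'a) \<Rightarrow> real"
  assumes "a < n" "\<And>X. integral\<^sup>L D (\<lambda>y. \<Phi> (X(a := y))) = 0"
  shows "integral\<^sup>L (sample n) \<Phi> = 0"
  unfolding sample_def by (subst integral_Pi_pmf_resample) (use assms finite_D in auto)

lemma integral_sample_component:
  fixes F :: "'a \<Rightarrow> real"
  assumes "i < n"
  shows "integral\<^sup>L (sample n) (\<lambda>X. F (X i)) = integral\<^sup>L D F"
  using integral_Pi_pmf_component[where A = "{..<n}" and p = "\<lambda>_. D"] assms unfolding sample_def by simp

lemma integral_sample_two_components: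
  fixes F :: "'a \<Rightarrow> 'a \<Rightarrow> real"
  assumes "i < n" "j < n" "i \<noteq> j"
  shows "integral\<^sup>L (sample n) (\<lambda>X. F (X i) (X j)) = integral\<^sup>L D (\<lambda>x. integral\<^sup>L D (F x))"
proof -
  have "integral\<^sup>L (sample n) (\<lambda>X. F (X i) (X j)) =
        integral\<^sup>L (sample n) (\<lambda>X. integral\<^sup>L D (\<lambda>y. F ((X(j := y)) i) ((X(j := y)) j)))"
    unfolding sample_def by (rule integral_Pi_pmf_resample) (use assms finite_D in auto)
  also have "\<dots> = integral\<^sup>L (sample n) (\<lambda>X. integral\<^sup>L D (F (X i)))"
    using assms by simp
  finally show ?thesis
    using integral_sample_component[OF assms(1)] by simp
qed

lemma integral_h1_mul:
  assumes "a < n" "\<And>X y. G (X(a := y)) = G X"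
  shows "integral\<^sup>L (sample n) (\<lambda>X. h1 (X a) * G X) = 0"
proof (rule integral_sample_resample[OF assms(1)])
  show "integral\<^sup>L D (\<lambda>y. h1 ((X(a := y)) a) * G (X(a := y))) = 0" for X
    by (simp add: assms(2) integral_h1)
qed

lemma integral_h2_mul:
  assumes "a < n" "i \<noteq> j" "a = i \<or> a = j" "\<And>X y. G (X(a := y)) = G X"
  shows "integral\<^sup>L (sample n) (\<lambda>X. h2 (X i) (X j) * G X) = 0"
proof (rule integral_sample_resample[OF assms(1)])
  have "integral\<^sup>L D (\<lambda>y. h2 y x) = 0" for x
    by (subst h2_commute) (rule integral_h2)
  then show "integral\<^sup>L D (\<lambda>y. h2 ((X(a := y)) i) ((X(a := y)) j) * G (X(a := y))) = 0" for X
    using assms(2,3) by (auto simp: assms(4) integral_h2)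
qed

lemma ustat_decomp: "ustat n X = real (card (pairs_below n)) * theta + lin_part n X + deg_part n X"
proof -
  have "ustat n X = (\<Sum>(i, j)\<in>pairs_below n. h2 (X i) (X j) + (h1 (X i) + h1 (X j)) + theta)"
    unfolding ustat_def by (intro sum.cong refl) (auto simp: h2_def)
  also have "\<dots> = deg_part n X + (\<Sum>(i, j)\<in>pairs_below n. h1 (X i) + h1 (X j)) + card (pairs_below n) * theta"
    unfolding deg_part_def by (simp add: sum.distrib case_prod_unfold)
  finally show ?thesis
    unfolding lin_part_def sum_pairs_below_add by simp
qed

lemma integral_lin_part: "integral\<^sup>L (sample n) (lin_part n) = 0"
  unfolding lin_part_def by (simp add: integral_sample_component integral_h1)

lemma integral_deg_part: "integral\<^sup>L (sample n) (deg_part n) = 0"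
  unfolding deg_part_def
  by (simp add: integral_sum case_prod_unfold integral_sample_two_components integral_h2 pairs_below_def)

lemma integral_ustat: "integral\<^sup>L (sample n) (ustat n) = real (card (pairs_below n)) * theta"
  unfolding ustat_decomp[abs_def] using integral_lin_part integral_deg_part by simp

lemma ustat_centered: "ustat n X - integral\<^sup>L (sample n) (ustat n) = lin_part n X + deg_part n X"
  unfolding integral_ustat ustat_decomp by simp

lemma integral_h1_h1:
  assumes "i < n" "j < n"
  shows "integral\<^sup>L (sample n) (\<lambda>X. h1 (X i) * h1 (X j)) = (if i = j then var_h1 else 0)"
  using assms integral_sample_component[of i n "\<lambda>x. (h1 x)^2"] integral_h1_mul[of i n "\<lambda>X. h1 (X j)"]
  by (auto simp: var_h1_def power2_eq_square)

lemma integral_lin_part_sq: "integral\<^sup>L (sample n) (\<lambda>X. (lin_part n X)^2) = (real n - 1)^2 * (real n * var_h1)"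
proof -
  have "(\<lambda>X. (lin_part n X)^2) = (\<lambda>X. (real n - 1)^2 * (\<Sum>i<n. \<Sum>j<n. h1 (X i) * h1 (X j)))"
    unfolding lin_part_def by (intro ext) (simp add: power_mult_distrib power2_eq_square sum_product)
  then show ?thesis
    by (simp add: integral_sum integral_h1_h1)
qed

lemma integral_h1_h2:
  assumes "k < n" "(i, j) \<in> pairs_below n"
  shows "integral\<^sup>L (sample n) (\<lambda>X. h1 (X k) * h2 (X i) (X j)) = 0"
proof -
  have ij: "i < j" "j < n"
    using assms(2) by (auto simp: pairs_below_def)
  have "integral\<^sup>L (sample n) (\<lambda>X. h2 (X i) (X j) * h1 (X k)) = 0"
    using integral_h2_mul[of i n i j "\<lambda>X. h1 (X k)"] integral_h2_mul[of j n i j "\<lambda>X. h1 (X k)"] ij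
    by (cases "k = i") auto
  then show ?thesis
    by (simp add: mult.commute)
qed

lemma integral_lin_part_deg_part: "integral\<^sup>L (sample n) (\<lambda>X. lin_part n X * deg_part n X) = 0"
proof -
  have "(\<lambda>X. lin_part n X * deg_part n X) =
        (\<lambda>X. (real n - 1) * (\<Sum>k<n. \<Sum>P\<in>pairs_below n. h1 (X k) * h2 (X (fst P)) (X (snd P))))"
    unfolding lin_part_def deg_part_def by (intro ext) (simp add: sum_product case_prod_unfold)
  then show ?thesis
    by (simp add: integral_sum integral_h1_h2)
qed

text \<open>Distinct pairs share at most one index, so one factor can be integrated out.\<close>
lemma integral_h2_h2:
  assumes P: "(i, j) \<in> pairs_below n" and Q: "(k, l) \<in> pairs_below n" and "(i, j) \<noteq> (k, l)"
  shows "integral\<^sup>L (sample n) (\<lambda>X. h2 (X i) (X j) * h2 (X k) (X l)) = 0"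
proof -
  have ij: "i < j" "j < n" "k < l" "l < n"
    using P Q by (auto simp: pairs_below_def)
  with assms(3) consider "i \<notin> {k, l}" | "j \<notin> {k, l}"
    by fastforce
  then show ?thesis
  proof cases
    case 1
    then show ?thesis by (intro integral_h2_mul[of i]) (use ij in auto)
  next
    case 2
    then show ?thesis by (intro integral_h2_mul[of j]) (use ij in auto)
  qed
qed

lemma integral_deg_part_sq:
  "integral\<^sup>L (sample n) (\<lambda>X. (deg_part n X)^2) =
   (\<Sum>P\<in>pairs_below n. integral\<^sup>L (sample n) (\<lambda>X. (h2 (X (fst P)) (X (snd P)))^2))"
proof -
  have "(\<lambda>X. (deg_part n X)^2) =
        (\<lambda>X. \<Sum>P\<in>pairs_below n. \<Sum>Q\<in>pairs_below n. h2 (X (fst P)) (X (snd P)) * h2 (X (fst Q)) (X (snd Q)))"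
    unfolding deg_part_def by (intro ext) (simp add: power2_eq_square sum_product case_prod_unfold)
  then have "integral\<^sup>L (sample n) (\<lambda>X. (deg_part n X)^2) =
     (\<Sum>P\<in>pairs_below n. \<Sum>Q\<in>pairs_below n.
        integral\<^sup>L (sample n) (\<lambda>X. h2 (X (fst P)) (X (snd P)) * h2 (X (fst Q)) (X (snd Q))))"
    by (simp add: integral_sum)
  also have "\<dots> = (\<Sum>P\<in>pairs_below n. \<Sum>Q\<in>pairs_below n.
        if P = Q then integral\<^sup>L (sample n) (\<lambda>X. (h2 (X (fst P)) (X (snd P)))^2) else 0)"
  proof (intro sum.cong refl)
    fix P Q
    assume "P \<in> pairs_below n" "Q \<in> pairs_below n"
    then show "integral\<^sup>L (sample n) (\<lambda>X. h2 (X (fst P)) (X (snd P)) * h2 (X (fst Q)) (X (snd Q))) =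
      (if P = Q then integral\<^sup>L (sample n) (\<lambda>X. (h2 (X (fst P)) (X (snd P)))^2) else 0)"
      using integral_h2_h2[of "fst P" "snd P" n "fst Q" "snd Q"] by (auto simp: power2_eq_square)
  qed
  finally show ?thesis
    by simp
qed

lemma integral_deg_part_sq_le: "integral\<^sup>L (sample n) (\<lambda>X. (deg_part n X)^2) \<le> 2 * real n * (real n - 1)"
proof -
  have "integral\<^sup>L (sample n) (\<lambda>X. (deg_part n X)^2) \<le> (\<Sum>P\<in>pairs_below n. 4)"
    unfolding integral_deg_part_sq
    by (intro sum_mono measure_pmf.integral_le_const) (auto simp: h2_sq_le_4)
  then show ?thesis
    by (simp add: card_pairs_below)
qed

lemma variance_ustat:
  "measure_pmf.variance (sample n) (ustat n) =
   (real n - 1)^2 * (real n * var_h1) + integral\<^sup>L (sample n) (\<lambda>X. (deg_part n X)^2)"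
proof -
  have "measure_pmf.variance (sample n) (ustat n) =
        integral\<^sup>L (sample n) (\<lambda>X. (lin_part n X)^2 + 2 * (lin_part n X * deg_part n X) + (deg_part n X)^2)"
    by (simp add: ustat_centered power2_eq_square algebra_simps)
  then show ?thesis
    by (simp add: integral_lin_part_sq integral_lin_part_deg_part)
qed

end

section \<open>Asymptotic normality of U-statistics with growing linear part\<close>

locale u_statistic_seq =
  fixes D :: "nat \<Rightarrow> 'a pmf" and f :: "nat \<Rightarrow> 'a \<Rightarrow> 'a \<Rightarrow> real" and d :: 'a
  assumes u_statistic: "\<And>n. u_statistic (D n) (f n)"
    and var_h1_growth: "filterlim (\<lambda>n. real n * u_statistic.var_h1 (D n) (f n)) at_top sequentially"
begin

abbreviation S :: "nat \<Rightarrow> (nat \<Rightarrow> 'a) pmf" where "S n \<equiv> u_statistic.sample (D n) d n"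
abbreviation T :: "nat \<Rightarrow> (nat \<Rightarrow> 'a) \<Rightarrow> real" where "T n \<equiv> u_statistic.ustat (f n) n"
abbreviation L :: "nat \<Rightarrow> (nat \<Rightarrow> 'a) \<Rightarrow> real" where "L n \<equiv> u_statistic.lin_part (D n) (f n) n"
abbreviation R :: "nat \<Rightarrow> (nat \<Rightarrow> 'a) \<Rightarrow> real" where "R n \<equiv> u_statistic.deg_part (D n) (f n) n"
abbreviation s :: "nat \<Rightarrow> real" where "s n \<equiv> u_statistic.var_h1 (D n) (f n)"
definition V :: "nat \<Rightarrow> real" where "V n = measure_pmf.variance (S n) (T n)"
definition B :: "nat \<Rightarrow> real" where "B n = integral\<^sup>L (S n) (\<lambda>X. (R n X)^2)"

lemma V_eq: "V n = (real n - 1)^2 * (real n * s n) + B n"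
  unfolding V_def B_def by (rule u_statistic.variance_ustat[OF u_statistic])

lemma B_bounds: "0 \<le> B n" "B n \<le> 2 * real n * (real n - 1)"
  unfolding B_def by (simp_all add: u_statistic.integral_deg_part_sq_le[OF u_statistic])

lemma eventually_large: "eventually (\<lambda>n. 2 \<le> real n \<and> 1 \<le> real n * s n \<and> 0 < s n \<and> 0 < V n) sequentially"
proof -
  have "eventually (\<lambda>n. 1 \<le> real n * s n) sequentially"
    using var_h1_growth by (simp add: filterlim_at_top)
  moreover have "eventually (\<lambda>n. 2 \<le> real n) sequentially"
    by (rule eventually_sequentiallyI[of 2]) simp
  ultimately show ?thesis
  proof eventually_elim
    case (elim n)
    then have "0 < s n"
      by (smt (verit) mult_nonneg_nonpos of_nat_0_le_iff)
    then have "0 < (real n - 1)^2 * (real n * s n)"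
      using elim by simp
    then have "0 < V n"
      unfolding V_eq using B_bounds(1)[of n] by (rule add_pos_nonneg)
    with elim \<open>0 < s n\<close> show ?case
      by blast
  qed
qed

text \<open>B n = O(n^2) is negligible against the variance (n - 1)^2 n s n of the linear part, since n s n \<longrightarrow> \<infinity>.\<close>
lemma B_over_V_tendsto_0: "(\<lambda>n. B n / V n) \<longlonglongrightarrow> 0"
proof (rule Lim_null_comparison)
  show "eventually (\<lambda>n. norm (B n / V n) \<le> 4 / (real n * s n)) sequentially"
    using eventually_large
  proof eventually_elim
    case (elim n)
    then have A_pos: "0 < (real n - 1)^2 * (real n * s n)"
      by simp
    have "norm (B n / V n) \<le> B n / ((real n - 1)^2 * (real n * s n))"
      using B_bounds(1)[of n] elim A_pos by (simp add: V_eq frac_le)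
    also have "\<dots> \<le> 2 * real n * (real n - 1) / ((real n - 1)^2 * (real n * s n))"
      using B_bounds(2)[of n] A_pos by (intro divide_right_mono) auto
    also have "\<dots> = (real n * (real n - 1) * 2) / (real n * (real n - 1) * ((real n - 1) * s n))"
      by (simp add: power2_eq_square mult_ac)
    also have "\<dots> = 2 / ((real n - 1) * s n)"
      using elim by (intro mult_divide_mult_cancel_left) simp
    also have "\<dots> \<le> 4 / (real n * s n)"
      using elim by (simp add: field_simps)
    finally show ?case .
  qed
  show "(\<lambda>n. 4 / (real n * s n)) \<longlonglongrightarrow> 0"
    by (rule tendsto_divide_0[OF tendsto_const filterlim_at_top_imp_at_infinity[OF var_h1_growth]])
qed

definition lin_scale :: "nat \<Rightarrow> real" where "lin_scale n = (real n - 1) / sqrt (V n)"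

lemma n_lin_scale_sq_tendsto: "(\<lambda>n. real n * (lin_scale n)^2 * s n) \<longlonglongrightarrow> 1"
proof -
  have "eventually (\<lambda>n. 1 - B n / V n = real n * (lin_scale n)^2 * s n) sequentially"
    using eventually_large
  proof eventually_elim
    case (elim n)
    have "real n * (lin_scale n)^2 * s n = (real n - 1)^2 * (real n * s n) / V n"
      using elim by (simp add: lin_scale_def power_divide)
    also have "\<dots> = 1 - B n / V n"
      using elim V_eq[of n] by (simp add: field_simps)
    finally show ?case ..
  qed
  moreover have "(\<lambda>n. 1 - B n / V n) \<longlonglongrightarrow> 1 - 0"
    by (intro tendsto_intros B_over_V_tendsto_0)
  ultimately show ?thesis
    by (simp add: Lim_transform_eventually)
qed

lemma lin_scale_tendsto_0: "lin_scale \<longlonglongrightarrow> 0"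
proof (rule Lim_null_comparison)
  show "eventually (\<lambda>n. norm (lin_scale n) \<le> 1 / sqrt (real n * s n)) sequentially"
    using eventually_large
  proof eventually_elim
    case (elim n)
    have "(real n - 1) * sqrt (real n * s n) = sqrt ((real n - 1)^2 * (real n * s n))"
      using elim by (simp add: real_sqrt_mult)
    also have "\<dots> \<le> sqrt (V n)"
      using B_bounds(1)[of n] by (simp add: V_eq)
    finally have "(real n - 1) / sqrt (V n) \<le> (real n - 1) / ((real n - 1) * sqrt (real n * s n))"
      using elim by (intro divide_left_mono) auto
    then show ?case
      using elim by (simp add: lin_scale_def)
  qed
  show "(\<lambda>n. 1 / sqrt (real n * s n)) \<longlonglongrightarrow> 0"
    by (intro tendsto_divide_0[OF tendsto_const] filterlim_at_top_imp_at_infinity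
              filterlim_compose[OF sqrt_at_top var_h1_growth])
qed

lemma char_lin_part_tendsto:
  "(\<lambda>n. integral\<^sup>L (S n) (\<lambda>X. iexp (t * (L n X / sqrt (V n))))) \<longlonglongrightarrow> exp (- (t^2) / 2)"
proof -
  have "(\<lambda>n. integral\<^sup>L (S n) (\<lambda>X. iexp (t * lin_scale n * (\<Sum>i<n. u_statistic.h1 (D n) (f n) (X i)))))
        \<longlonglongrightarrow> exp (- (t^2 * 1) / 2)"
    unfolding u_statistic.sample_def[OF u_statistic]
  proof (rule tendsto_integral_iexp_sum_iid)
    fix n
    interpret u_statistic "D n" "f n" d
      by (rule u_statistic)
    show "finite (set_pmf (D n))" "\<bar>h1 x\<bar> \<le> 1" "integral\<^sup>L (D n) h1 = 0" for x
      by (rule finite_D abs_h1_le_1 integral_h1)+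
  next
    have "(\<lambda>n. t^2 * (real n * (lin_scale n)^2 * s n)) \<longlonglongrightarrow> t^2 * 1"
      by (intro tendsto_mult_left n_lin_scale_sq_tendsto)
    then show "(\<lambda>n. real n * (t * lin_scale n)^2 * integral\<^sup>L (D n) (\<lambda>x. (u_statistic.h1 (D n) (f n) x)^2))
               \<longlonglongrightarrow> t^2 * 1"
      by (simp add: u_statistic.var_h1_def[OF u_statistic, symmetric] power_mult_distrib mult_ac)
    show "(\<lambda>n. t * lin_scale n) \<longlonglongrightarrow> 0"
      using tendsto_mult_left[OF lin_scale_tendsto_0, of t] by simp
  qed
  moreover have "t * (L n X / sqrt (V n)) = t * lin_scale n * (\<Sum>i<n. u_statistic.h1 (D n) (f n) (X i))" for n X
    by (simp add: u_statistic.lin_part_def[OF u_statistic] lin_scale_def)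
  ultimately show ?thesis
    by simp
qed

lemma char_deg_part_negligible:
  "(\<lambda>n. integral\<^sup>L (S n) (\<lambda>X. iexp (t * ((L n X + R n X) / sqrt (V n)))) -
        integral\<^sup>L (S n) (\<lambda>X. iexp (t * (L n X / sqrt (V n))))) \<longlonglongrightarrow> 0"
proof (rule Lim_null_comparison)
  show "eventually (\<lambda>n. norm (integral\<^sup>L (S n) (\<lambda>X. iexp (t * ((L n X + R n X) / sqrt (V n)))) -
        integral\<^sup>L (S n) (\<lambda>X. iexp (t * (L n X / sqrt (V n))))) \<le> \<bar>t\<bar> * sqrt (B n / V n)) sequentially"
    using eventually_large
  proof eventually_elim
    case (elim n)
    interpret u_statistic "D n" "f n" d
      by (rule u_statistic)
    have "norm (integral\<^sup>L (S n) (\<lambda>X. iexp (t * ((L n X + R n X) / sqrt (V n)))) -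
                integral\<^sup>L (S n) (\<lambda>X. iexp (t * (L n X / sqrt (V n)))))
          \<le> integral\<^sup>L (S n) (\<lambda>X. norm (iexp (t * ((L n X + R n X) / sqrt (V n))) - iexp (t * (L n X / sqrt (V n)))))"
      unfolding Bochner_Integration.integral_diff[OF integrable_sample integrable_sample, symmetric]
      by (rule integral_norm_bound)
    also have "\<dots> \<le> integral\<^sup>L (S n) (\<lambda>X. \<bar>t\<bar> / sqrt (V n) * \<bar>R n X\<bar>)"
    proof (rule integral_mono)
      show "norm (iexp (t * ((L n X + R n X) / sqrt (V n))) - iexp (t * (L n X / sqrt (V n))))
            \<le> \<bar>t\<bar> / sqrt (V n) * \<bar>R n X\<bar>" for X
        using norm_iexp_diff_le[of "t * ((L n X + R n X) / sqrt (V n))" "t * (L n X / sqrt (V n))"] elim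
        by (simp add: field_simps abs_mult abs_divide)
    qed simp_all
    also have "\<dots> = \<bar>t\<bar> / sqrt (V n) * integral\<^sup>L (S n) (\<lambda>X. \<bar>R n X\<bar>)"
      by simp
    also have "\<dots> \<le> \<bar>t\<bar> / sqrt (V n) * sqrt (B n)"
      using integral_abs_le_sqrt_integral_sq[OF finite_set_sample[of n], where Y = "R n"] elim
      by (intro mult_left_mono) (simp_all add: B_def)
    also have "\<dots> = \<bar>t\<bar> * sqrt (B n / V n)"
      by (simp add: real_sqrt_divide)
    finally show ?case .
  qed
  have "(\<lambda>n. sqrt (B n / V n)) \<longlonglongrightarrow> 0"
    using tendsto_real_sqrt[OF B_over_V_tendsto_0] by simp
  then show "(\<lambda>n. \<bar>t\<bar> * sqrt (B n / V n)) \<longlonglongrightarrow> 0"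
    by (rule tendsto_mult_right_zero)
qed

lemma char_std_ustat_tendsto:
  "(\<lambda>n. integral\<^sup>L (S n) (\<lambda>X. iexp (t * ((T n X - integral\<^sup>L (S n) (T n)) / sqrt (V n)))))
   \<longlonglongrightarrow> exp (- (t^2) / 2)"
proof -
  have "(\<lambda>n. integral\<^sup>L (S n) (\<lambda>X. iexp (t * ((T n X - integral\<^sup>L (S n) (T n)) / sqrt (V n))))) =
        (\<lambda>n. (integral\<^sup>L (S n) (\<lambda>X. iexp (t * ((L n X + R n X) / sqrt (V n)))) -
               integral\<^sup>L (S n) (\<lambda>X. iexp (t * (L n X / sqrt (V n))))) +
              integral\<^sup>L (S n) (\<lambda>X. iexp (t * (L n X / sqrt (V n)))))"
    by (simp only: u_statistic.ustat_centered[OF u_statistic] diff_add_cancel)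
  then show ?thesis
    using tendsto_add[OF char_deg_part_negligible char_lin_part_tendsto] by (simp only: add_0_left)
qed

end

section \<open>The edge count as a U-statistic\<close>

definition attr_pmf :: "nat \<Rightarrow> real \<Rightarrow> (nat \<Rightarrow> bool) pmf" where
  "attr_pmf m p = Pi_pmf {..<m} False (\<lambda>_. bernoulli_pmf p)"

definition meets :: "nat \<Rightarrow> (nat \<Rightarrow> bool) \<Rightarrow> (nat \<Rightarrow> bool) \<Rightarrow> real" where
  "meets m x y = (if \<exists>a<m. x a \<and> y a then 1 else 0)"

lemma finite_set_attr_pmf: "finite (set_pmf (attr_pmf m p))"
  unfolding attr_pmf_def by (rule finite_set_Pi_pmf) auto

lemma u_statistic_meets: "u_statistic (attr_pmf m p) (meets m)"
  by unfold_locales (auto simp: finite_set_attr_pmf meets_def)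

lemma rig_eq_map_Pi_pmf: "rig n m p = map_pmf case_prod (Pi_pmf {..<n} (\<lambda>_. False) (\<lambda>_. attr_pmf m p))"
proof (rule pmf_eqI)
  fix S :: "nat \<times> nat \<Rightarrow> bool"
  have "inj (case_prod :: (nat \<Rightarrow> nat \<Rightarrow> bool) \<Rightarrow> _)"
    by (intro injI) (metis curry_case_prod)
  then have "pmf (map_pmf case_prod (Pi_pmf {..<n} (\<lambda>_. False) (\<lambda>_. attr_pmf m p))) S =
             pmf (Pi_pmf {..<n} (\<lambda>_. False) (\<lambda>_. attr_pmf m p)) (curry S)"
    by (metis case_prod_curry pmf_map_inj')
  also have "\<dots> = pmf (rig n m p) S"
  proof (cases "\<forall>z. z \<notin> {..<n} \<times> {..<m} \<longrightarrow> \<not> S z")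
    case True
    have "pmf (rig n m p) S = (\<Prod>z\<in>{..<n} \<times> {..<m}. pmf (bernoulli_pmf p) (S z))"
      unfolding rig_def using True by (subst pmf_Pi) auto
    also have "\<dots> = (\<Prod>i<n. \<Prod>a<m. pmf (bernoulli_pmf p) (S (i, a)))"
      by (simp add: prod.cartesian_product)
    also have "\<dots> = (\<Prod>i<n. pmf (attr_pmf m p) (curry S i))"
      unfolding attr_pmf_def using True by (intro prod.cong refl, subst pmf_Pi) auto
    also have "\<dots> = pmf (Pi_pmf {..<n} (\<lambda>_. False) (\<lambda>_. attr_pmf m p)) (curry S)"
      using True by (subst pmf_Pi) (auto simp: fun_eq_iff)
    finally show ?thesis ..
  next
    case False
    then obtain i a where ia: "(i, a) \<notin> {..<n} \<times> {..<m}" "S (i, a)"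
      by auto
    have "pmf (attr_pmf m p) (curry S i) = 0" if "i < n"
      unfolding attr_pmf_def using ia that by (subst pmf_Pi) auto
    then have "pmf (Pi_pmf {..<n} (\<lambda>_. False) (\<lambda>_. attr_pmf m p)) (curry S) = 0"
      using ia by (cases "i < n") (auto simp: pmf_Pi fun_eq_iff intro!: prod_zero)
    moreover have "pmf (rig n m p) S = 0"
      unfolding rig_def using ia by (subst pmf_Pi) auto
    ultimately show ?thesis
      by simp
  qed
  finally show "pmf (rig n m p) S = pmf (map_pmf case_prod (Pi_pmf {..<n} (\<lambda>_. False) (\<lambda>_. attr_pmf m p))) S"
    by simp
qed

lemma num_edges_eq_ustat: "real (num_edges n m (case_prod X)) = u_statistic.ustat (meets m) n X"
proof -
  interpret u_statistic "attr_pmf m p" "meets m" "\<lambda>_. False"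
    by (rule u_statistic_meets)
  have "{(i, j). i < j \<and> j < n \<and> (\<exists>a<m. X i a \<and> X j a)} = {z \<in> pairs_below n. \<exists>a<m. X (fst z) a \<and> X (snd z) a}"
    by (auto simp: pairs_below_def)
  then have "real (num_edges n m (case_prod X)) = (\<Sum>z\<in>pairs_below n. if \<exists>a<m. X (fst z) a \<and> X (snd z) a then 1 else 0)"
    by (simp add: num_edges_def sum.inter_filter[symmetric])
  then show ?thesis
    by (simp add: ustat_def meets_def case_prod_unfold)
qed

lemma edges_mean_eq:
  "edges_mean n m p =
   integral\<^sup>L (u_statistic.sample (attr_pmf m p) (\<lambda>_. False) n) (u_statistic.ustat (meets m) n)"
  unfolding edges_mean_def rig_eq_map_Pi_pmf integral_map_pmf num_edges_eq_ustat
  by (simp add: u_statistic.sample_def[OF u_statistic_meets])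

lemma edges_var_eq:
  "edges_var n m p =
   measure_pmf.variance (u_statistic.sample (attr_pmf m p) (\<lambda>_. False) n) (u_statistic.ustat (meets m) n)"
  unfolding edges_var_def rig_eq_map_Pi_pmf integral_map_pmf num_edges_eq_ustat
  by (simp add: u_statistic.sample_def[OF u_statistic_meets])

lemma std_edges_distr_eq:
  "std_edges_distr n m p = measure_pmf (map_pmf
     (\<lambda>X. (u_statistic.ustat (meets m) n X - edges_mean n m p) / sqrt (edges_var n m p))
     (u_statistic.sample (attr_pmf m p) (\<lambda>_. False) n))"
  unfolding std_edges_distr_def rig_eq_map_Pi_pmf map_pmf_comp num_edges_eq_ustat
  by (simp add: u_statistic.sample_def[OF u_statistic_meets] o_def)

definition avoid_prob :: "nat \<Rightarrow> real \<Rightarrow> (nat \<Rightarrow> bool) \<Rightarrow> real" where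
  "avoid_prob m p x = (\<Prod>a<m. if x a then 1 - p else 1)"

lemma integral_attr_pmf_prod:
  fixes F :: "nat \<Rightarrow> bool \<Rightarrow> real"
  assumes "0 \<le> p" "p \<le> 1"
  shows "integral\<^sup>L (attr_pmf m p) (\<lambda>y. \<Prod>a<m. F a (y a)) = (\<Prod>a<m. p * F a True + (1 - p) * F a False)"
  unfolding attr_pmf_def
  by (subst integral_prod_Pi_pmf) (use assms in \<open>auto simp: finite_subset[OF subset_UNIV] mult.commute\<close>)

lemma integral_one_minus_meets:
  assumes "0 \<le> p" "p \<le> 1"
  shows "integral\<^sup>L (attr_pmf m p) (\<lambda>y. 1 - meets m x y) = avoid_prob m p x"
proof -
  have "1 - meets m x y = (\<Prod>a<m. if x a \<and> y a then 0 else 1)" for y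
    by (auto simp: meets_def intro: prod_zero prod.neutral)
  then show ?thesis
    using integral_attr_pmf_prod[OF assms, of m "\<lambda>a b. if x a \<and> b then 0 else 1"]
    by (auto simp: avoid_prob_def intro!: prod.cong)
qed

lemma integral_avoid_prob:
  assumes "0 \<le> p" "p \<le> 1"
  shows "integral\<^sup>L (attr_pmf m p) (avoid_prob m p) = (1 - p^2)^m"
  using integral_attr_pmf_prod[OF assms, of m "\<lambda>a b. if b then 1 - p else 1"] assms
  by (simp add: avoid_prob_def[abs_def] power2_eq_square algebra_simps)

lemma integral_avoid_prob_sq:
  assumes "0 \<le> p" "p \<le> 1"
  shows "integral\<^sup>L (attr_pmf m p) (\<lambda>x. (avoid_prob m p x)^2) = (1 - p + p * (1 - p)^2)^m"
proof -
  have "(avoid_prob m p x)^2 = (\<Prod>a<m. if x a then (1 - p)^2 else 1)" for x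
    by (simp add: avoid_prob_def power2_eq_square prod.distrib[symmetric] if_distrib cong: if_cong)
  then show ?thesis
    using integral_attr_pmf_prod[OF assms, of m "\<lambda>a b. if b then (1 - p)^2 else 1"]
    by (simp add: algebra_simps)
qed

lemma var_h1_meets:
  assumes "0 \<le> p" "p \<le> 1"
  shows "u_statistic.var_h1 (attr_pmf m p) (meets m) = (1 - p + p * (1 - p)^2)^m - ((1 - p^2)^2)^m"
proof -
  interpret u_statistic "attr_pmf m p" "meets m"
    by (rule u_statistic_meets)
  have proj: "proj x = 1 - avoid_prob m p x" for x
    using integral_one_minus_meets[OF assms, of m x] by (simp add: proj_def measure_pmf.prob_space)
  have "theta = 1 - (1 - p^2)^m"
    unfolding theta_def proj using integral_avoid_prob[OF assms] by (simp add: measure_pmf.prob_space)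
  then have h1: "h1 x = (1 - p^2)^m - avoid_prob m p x" for x
    by (simp add: h1_def proj)
  have "var_h1 = integral\<^sup>L (attr_pmf m p)
                (\<lambda>x. (avoid_prob m p x)^2 + (((1 - p^2)^m)^2 - 2 * (1 - p^2)^m * avoid_prob m p x))"
    unfolding var_h1_def h1 by (simp add: power2_diff algebra_simps)
  also have "\<dots> = integral\<^sup>L (attr_pmf m p) (\<lambda>x. (avoid_prob m p x)^2) +
                   (((1 - p^2)^m)^2 - 2 * (1 - p^2)^m * integral\<^sup>L (attr_pmf m p) (avoid_prob m p))"
    by (simp add: measure_pmf.prob_space)
  finally show ?thesis
    unfolding integral_avoid_prob[OF assms] integral_avoid_prob_sq[OF assms]
    by (simp add: power2_eq_square power_mult_distrib)
qed

lemma var_h1_meets_ge: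
  assumes "0 < \<epsilon>" "\<epsilon> < p" "p < 1 - \<epsilon>" and "m \<ge> 1"
  shows "\<epsilon>^(m + 3) \<le> u_statistic.var_h1 (attr_pmf m p) (meets m)"
proof -
  define a where "a = 1 - p + p * (1 - p)^2"
  define b where "b = (1 - p^2)^2"
  obtain k where k: "m = Suc k"
    using assms(4) by (cases m) auto
  have diff: "a - b = p^3 * (1 - p)"
    unfolding a_def b_def by (simp add: algebra_simps power2_eq_square power3_eq_cube power4_eq_xxxx)
  have "0 \<le> b"
    unfolding b_def by simp
  have "b \<le> a"
    using diff assms by (smt (verit) mult_nonneg_nonneg zero_le_power)
  have "\<epsilon> \<le> a"
    unfolding a_def using assms by (smt (verit) mult_nonneg_nonneg zero_le_power2)
  have "\<epsilon>^k * (\<epsilon>^3 * \<epsilon>) \<le> a^k * (a - b)"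
    unfolding diff using assms \<open>\<epsilon> \<le> a\<close> by (intro mult_mono power_mono) auto
  also have "\<dots> \<le> a^m - b^m"
  proof -
    have "b * b^k \<le> b * a^k"
      using \<open>0 \<le> b\<close> \<open>b \<le> a\<close> by (intro mult_left_mono power_mono) auto
    then show ?thesis
      unfolding k by (simp add: algebra_simps)
  qed
  also have "\<dots> = u_statistic.var_h1 (attr_pmf m p) (meets m)"
    using assms by (simp add: var_h1_meets a_def b_def)
  finally show ?thesis
    unfolding k by (simp add: power_add mult_ac eval_nat_numeral)
qed

lemma prob_not_adjacent:
  assumes "0 \<le> p" "p \<le> 1" "i < j" "j < n"
  shows "measure_pmf.prob (rig n m p) {S. \<not> (\<exists>a<m. S (i, a) \<and> S (j, a))} = (1 - p^2)^m"
proof -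
  interpret u_statistic "attr_pmf m p" "meets m" "\<lambda>_. False"
    by (rule u_statistic_meets)
  let ?E = "{S. \<not> (\<exists>a<m. S (i, a) \<and> S (j, a))}"
  have "measure_pmf.prob (rig n m p) ?E = integral\<^sup>L (rig n m p) (indicator ?E)"
    by simp
  also have "\<dots> = integral\<^sup>L (sample n) (\<lambda>X. indicator ?E (case_prod X))"
    unfolding rig_eq_map_Pi_pmf integral_map_pmf sample_def ..
  also have "\<dots> = integral\<^sup>L (sample n) (\<lambda>X. 1 - meets m (X i) (X j))"
    by (intro Bochner_Integration.integral_cong) (auto simp: indicator_def meets_def)
  also have "\<dots> = integral\<^sup>L (attr_pmf m p) (\<lambda>x. integral\<^sup>L (attr_pmf m p) (\<lambda>y. 1 - meets m x y))"
    by (rule integral_sample_two_components) (use assms in auto)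
  also have "\<dots> = integral\<^sup>L (attr_pmf m p) (avoid_prob m p)"
    by (simp only: integral_one_minus_meets[OF assms(1,2)])
  finally show ?thesis
    using integral_avoid_prob[OF assms(1,2)] by simp
qed

lemma prob_rig_incomplete_le:
  assumes "0 \<le> p" "p \<le> 1"
  shows "measure_pmf.prob (rig n m p) {S. num_edges n m S \<noteq> card (pairs_below n)} \<le> real n^2 * (1 - p^2)^m"
proof -
  define N where "N z = {S. \<not> (\<exists>a<m. S (fst z, a) \<and> S (snd z, a))}" for z :: "nat \<times> nat"
  have "num_edges n m S = card (pairs_below n)" if "\<forall>z\<in>pairs_below n. S \<notin> N z" for S
    using that unfolding num_edges_def pairs_below_def N_def by (intro arg_cong[where f = card]) auto
  then have "measure_pmf.prob (rig n m p) {S. num_edges n m S \<noteq> card (pairs_below n)} \<le>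
             measure_pmf.prob (rig n m p) (\<Union>z\<in>pairs_below n. N z)"
    by (intro measure_pmf.finite_measure_mono) auto
  also have "\<dots> \<le> (\<Sum>z\<in>pairs_below n. measure_pmf.prob (rig n m p) (N z))"
    by (rule measure_pmf.finite_measure_subadditive_finite) auto
  also have "\<dots> = (\<Sum>z\<in>pairs_below n. (1 - p^2)^m)"
  proof (intro sum.cong refl)
    fix z
    assume "z \<in> pairs_below n"
    then show "measure_pmf.prob (rig n m p) (N z) = (1 - p^2)^m"
      unfolding N_def using assms by (intro prob_not_adjacent) (auto simp: pairs_below_def)
  qed
  also have "\<dots> = real (card (pairs_below n)) * (1 - p^2)^m"
    by simp
  also have "\<dots> \<le> real n^2 * (1 - p^2)^m"
    using assms card_pairs_below_le by (intro mult_right_mono) (auto simp: power_le_one)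
  finally show ?thesis .
qed

section \<open>Few attributes: asymptotic normality\<close>

lemma cdf_measure_pmf_map_pmf:
  fixes Y :: "'a \<Rightarrow> real"
  shows "cdf (measure_pmf (map_pmf Y P)) x = cdf (distr (measure_pmf P) borel Y) x"
  unfolding cdf_def by (simp add: measure_distr)

lemma weak_conv_m_cdf_cong:
  assumes "\<And>n x. cdf (M n) x = cdf (M' n) x"
  shows "weak_conv_m M L \<longleftrightarrow> weak_conv_m M' L"
  unfolding weak_conv_m_def weak_conv_def using assms by simp

lemma char_distr_measure_pmf:
  fixes Y :: "'a \<Rightarrow> real"
  shows "char (distr (measure_pmf P) borel Y) t = integral\<^sup>L P (\<lambda>x. iexp (t * Y x))"
  unfolding char_def by (subst integral_distr) auto

lemma n_mult_power_tendsto_at_top: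
  fixes m :: "nat \<Rightarrow> nat" and q :: real
  assumes "0 < q" "q < 1" and sparse: "(\<lambda>n. real (m n) / ln (real n)) \<longlonglongrightarrow> 0"
  shows "filterlim (\<lambda>n. real n * q ^ (m n + k)) at_top sequentially"
proof -
  define L where "L = - ln q"
  have "L > 0"
    unfolding L_def using assms by simp
  have "eventually (\<lambda>n. dist (real (m n) / ln (real n)) 0 < 1 / (4 * L)) sequentially"
    using sparse \<open>L > 0\<close> by (simp add: tendsto_iff)
  then have "eventually (\<lambda>n. real (m n) / ln (real n) < 1 / (4 * L)) sequentially"
    by eventually_elim (simp add: dist_real_def abs_less_iff del: abs_divide)
  moreover have "eventually (\<lambda>n. 4 * real k * L + 1 \<le> ln (real n)) sequentially"
    using filterlim_at_top[THEN iffD1, OF ln_at_top[THEN filterlim_compose, OF filterlim_real_sequentially]]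
    by blast
  ultimately have "eventually (\<lambda>n. exp (ln (real n) / 2) \<le> real n * q ^ (m n + k)) sequentially"
  proof eventually_elim
    case (elim n)
    then have "0 < ln (real n)"
      using \<open>L > 0\<close> by (smt (verit) mult_nonneg_nonneg of_nat_0_le_iff)
    then have "0 < real n"
      by (cases "n = 0") auto
    have "real (m n + k) * L \<le> ln (real n) / 2"
      using elim \<open>0 < ln (real n)\<close> \<open>L > 0\<close> by (simp add: field_simps)
    then have "exp (ln (real n) / 2) \<le> exp (ln (real n) - real (m n + k) * L)"
      by simp
    also have "\<dots> = exp (ln (real n)) * exp (real (m n + k) * ln q)"
      by (simp add: L_def flip: exp_add)
    also have "\<dots> = real n * q ^ (m n + k)"
      using \<open>0 < real n\<close> \<open>0 < q\<close> by (simp only: exp_of_nat_mult exp_ln)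
    finally show ?case .
  qed
  moreover have "filterlim (\<lambda>n. exp (ln (real n) / 2)) at_top sequentially"
    by real_asymp
  ultimately show ?thesis
    by (rule filterlim_at_top_mono[rotated])
qed

lemma n_var_h1_meets_tendsto:
  fixes m :: "nat \<Rightarrow> nat" and p :: "nat \<Rightarrow> real"
  assumes "0 < \<epsilon>" and p: "\<And>n. \<epsilon> < p n \<and> p n < 1 - \<epsilon>" and m: "\<And>n. 1 \<le> m n"
    and sparse: "(\<lambda>n. real (m n) / ln (real n)) \<longlonglongrightarrow> 0"
  shows "filterlim (\<lambda>n. real n * u_statistic.var_h1 (attr_pmf (m n) (p n)) (meets (m n))) at_top sequentially"
proof (rule filterlim_at_top_mono)
  have "\<epsilon> < 1"
    using p[of 0] by simp
  with \<open>0 < \<epsilon>\<close> show "filterlim (\<lambda>n. real n * \<epsilon> ^ (m n + 3)) at_top sequentially"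
    using sparse by (rule n_mult_power_tendsto_at_top)
  show "eventually (\<lambda>n. real n * \<epsilon> ^ (m n + 3) \<le> real n * u_statistic.var_h1 (attr_pmf (m n) (p n)) (meets (m n)))
          sequentially"
    using \<open>0 < \<epsilon>\<close> p m by (intro always_eventually allI mult_left_mono var_h1_meets_ge) auto
qed

theorem weak_conv_std_edges_sparse:
  fixes m :: "nat \<Rightarrow> nat" and p :: "nat \<Rightarrow> real"
  assumes "0 < \<epsilon>" and "\<And>n. \<epsilon> < p n \<and> p n < 1 - \<epsilon>" and "\<And>n. 1 \<le> m n"
    and "(\<lambda>n. real (m n) / ln (real n)) \<longlonglongrightarrow> 0"
  shows "weak_conv_m (\<lambda>n. std_edges_distr n (m n) (p n)) std_normal_distribution"
proof -
  interpret u_statistic_seq "\<lambda>n. attr_pmf (m n) (p n)" "\<lambda>n. meets (m n)" "\<lambda>_. False"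
    by (intro u_statistic_seq.intro u_statistic_meets n_var_h1_meets_tendsto[OF assms])
  define Z where "Z n X = (T n X - integral\<^sup>L (S n) (T n)) / sqrt (V n)" for n X
  have "weak_conv_m (\<lambda>n. distr (S n) borel (Z n)) std_normal_distribution"
  proof (rule levy_continuity)
    show "real_distribution (distr (S n) borel (Z n))" for n
      by (rule prob_space.real_distribution_distr) (simp_all add: measure_pmf.prob_space_axioms)
    show "(\<lambda>n. char (distr (S n) borel (Z n)) t) \<longlonglongrightarrow> char std_normal_distribution t" for t
      unfolding char_distr_measure_pmf char_std_normal_distribution Z_def by (rule char_std_ustat_tendsto)
  qed (rule real_dist_normal_dist)
  moreover have "cdf (std_edges_distr n (m n) (p n)) x = cdf (distr (S n) borel (Z n)) x" for n x
    unfolding std_edges_distr_eq edges_mean_eq edges_var_eq cdf_measure_pmf_map_pmf Z_def V_def ..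
  ultimately show ?thesis
    using weak_conv_m_cdf_cong[of "\<lambda>n. std_edges_distr n (m n) (p n)" "\<lambda>n. distr (S n) borel (Z n)"]
    by blast
qed

section \<open>Many attributes: the graph is complete with high probability\<close>

lemma std_normal_density_ge:
  assumes "a \<le> x" "x \<le> b"
  shows "exp (- (a^2 + b^2) / 2) / sqrt (2 * pi) \<le> std_normal_density x"
proof -
  have "x^2 \<le> a^2 + b^2"
  proof (cases "0 \<le> x")
    case True
    then have "x^2 \<le> b^2"
      using assms by (intro power_mono) auto
    then show ?thesis
      using zero_le_power2[of a] by linarith
  next
    case False
    then have "(- x)^2 \<le> (- a)^2"
      using assms by (intro power_mono) auto
    then have "x^2 \<le> a^2"
      by simp
    then show ?thesis
      using zero_le_power2[of b] by linarith
  qed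
  then have "exp (- (a^2 + b^2) / 2) \<le> exp (- (x^2) / 2)"
    by simp
  then show ?thesis
    unfolding std_normal_density_def by (simp add: divide_right_mono)
qed

lemma emeasure_std_normal_interval_pos:
  assumes "a < b"
  shows "0 < emeasure std_normal_distribution {a..b}"
proof -
  define c where "c = exp (- (a^2 + b^2) / 2) / sqrt (2 * pi)"
  have "c \<le> std_normal_density x" if "x \<in> {a..b}" for x
    unfolding c_def using that by (intro std_normal_density_ge) auto
  then have "(\<integral>\<^sup>+ x. ennreal c * indicator {a..b} x \<partial>lborel) \<le>
             (\<integral>\<^sup>+ x. ennreal (std_normal_density x) * indicator {a..b} x \<partial>lborel)"
    by (intro nn_integral_mono) (auto simp: indicator_def intro!: ennreal_leI)
  also have "\<dots> = emeasure std_normal_distribution {a..b}"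
    by (rule emeasure_density[symmetric]) auto
  finally have "ennreal c * ennreal (b - a) \<le> emeasure std_normal_distribution {a..b}"
    using assms by (subst (asm) nn_integral_cmult_indicator) auto
  moreover have "0 < ennreal c * ennreal (b - a)"
    using assms by (simp add: c_def ennreal_mult'' ennreal_zero_less_mult_iff)
  ultimately show ?thesis
    by (rule order.strict_trans2[rotated])
qed

lemma cdf_std_normal_bounds: "0 < cdf std_normal_distribution x" "cdf std_normal_distribution x < 1"
proof -
  interpret real_distribution std_normal_distribution
    by (rule real_dist_normal_dist)
  have "0 < emeasure std_normal_distribution {x - 1..x}"
    by (rule emeasure_std_normal_interval_pos) simp
  also have "\<dots> \<le> emeasure std_normal_distribution {..x}"
    by (intro emeasure_mono) auto
  finally show "0 < cdf std_normal_distribution x"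
    unfolding cdf_def by (simp add: emeasure_eq_measure)
  have "0 < emeasure std_normal_distribution {x + 1..x + 2}"
    by (rule emeasure_std_normal_interval_pos) simp
  also have "\<dots> \<le> emeasure std_normal_distribution (UNIV - {..x})"
    by (intro emeasure_mono) auto
  finally have "0 < measure std_normal_distribution (UNIV - {..x})"
    by (simp add: emeasure_eq_measure)
  then show "cdf std_normal_distribution x < 1"
    unfolding cdf_def using prob_compl[of "{..x}"] by simp
qed

lemma isCont_cdf_std_normal: "isCont (cdf std_normal_distribution) x"
proof -
  interpret real_distribution std_normal_distribution
    by (rule real_dist_normal_dist)
  have "emeasure std_normal_distribution {x} = (\<integral>\<^sup>+ y. ennreal (std_normal_density y) * indicator {x} y \<partial>lborel)"
    by (rule emeasure_density) auto
  also have "\<dots> = 0"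
    using AE_lborel_singleton[of x] by (subst nn_integral_0_iff_AE) (auto elim!: eventually_mono)
  finally show ?thesis
    by (simp add: isCont_cdf measure_def)
qed

lemma cdf_map_pmf_dichotomy:
  fixes Y :: "'a \<Rightarrow> real"
  assumes "measure_pmf.prob P {\<omega>. Y \<omega> \<noteq> \<kappa>} \<le> \<delta>"
  shows "1 - \<delta> \<le> cdf (map_pmf Y P) x \<or> cdf (map_pmf Y P) x \<le> \<delta>"
proof (cases "\<kappa> \<le> x")
  case True
  have "1 - \<delta> \<le> 1 - measure_pmf.prob P {\<omega>. Y \<omega> \<noteq> \<kappa>}"
    using assms by simp
  also have "\<dots> = measure_pmf.prob P {\<omega>. Y \<omega> = \<kappa>}"
    using measure_pmf.prob_compl[of "{\<omega>. Y \<omega> \<noteq> \<kappa>}" P] by (simp add: Compl_eq_Diff_UNIV[symmetric] Collect_neg_eq[symmetric])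
  also have "\<dots> \<le> cdf (map_pmf Y P) x"
    unfolding cdf_def using True by (auto intro!: measure_pmf.finite_measure_mono)
  finally show ?thesis ..
next
  case False
  then have "cdf (map_pmf Y P) x \<le> measure_pmf.prob P {\<omega>. Y \<omega> \<noteq> \<kappa>}"
    unfolding cdf_def by (auto intro!: measure_pmf.finite_measure_mono)
  with assms show ?thesis
    by simp
qed

lemma not_weak_conv_m_cdf_dichotomy:
  assumes cont: "isCont (cdf N) x" and "0 < cdf N x" "cdf N x < 1"
    and "\<delta> \<longlonglongrightarrow> 0" and dichotomy: "\<And>n. 1 - \<delta> n \<le> cdf (M n) x \<or> cdf (M n) x \<le> \<delta> n"
  shows "\<not> weak_conv_m M N"
proof
  assume "weak_conv_m M N"
  then have "(\<lambda>n. cdf (M n) x) \<longlonglongrightarrow> cdf N x"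
    using cont unfolding weak_conv_m_def weak_conv_def by blast
  define \<eta> where "\<eta> = min (cdf N x) (1 - cdf N x) / 2"
  have "\<eta> > 0"
    unfolding \<eta>_def using assms(2,3) by simp
  have "eventually (\<lambda>n. dist (cdf (M n) x) (cdf N x) < \<eta>) sequentially"
    using \<open>(\<lambda>n. cdf (M n) x) \<longlonglongrightarrow> cdf N x\<close> \<open>\<eta> > 0\<close> by (simp add: tendsto_iff)
  moreover have "eventually (\<lambda>n. dist (\<delta> n) 0 < \<eta>) sequentially"
    using \<open>\<delta> \<longlonglongrightarrow> 0\<close> \<open>\<eta> > 0\<close> by (simp add: tendsto_iff)
  ultimately have "eventually (\<lambda>n. dist (cdf (M n) x) (cdf N x) < \<eta> \<and> dist (\<delta> n) 0 < \<eta>) sequentially"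
    by (rule eventually_conj)
  then obtain n where "\<bar>cdf (M n) x - cdf N x\<bar> < \<eta>" "\<bar>\<delta> n\<bar> < \<eta>"
    by (auto simp: eventually_sequentially dist_real_def)
  moreover have "2 * \<eta> \<le> cdf N x" "2 * \<eta> \<le> 1 - cdf N x"
    unfolding \<eta>_def by auto
  ultimately show False
    using dichotomy[of n] by linarith
qed

lemma n_sq_mult_power_tendsto_0:
  fixes m :: "nat \<Rightarrow> nat" and q :: real
  assumes "0 < q" "q < 1" and dense: "filterlim (\<lambda>n. real (m n) / ln (real n)) at_top sequentially"
  shows "(\<lambda>n. real n^2 * q^(m n)) \<longlonglongrightarrow> 0"
proof (rule Lim_null_comparison)
  define K where "K = - ln q"
  have "K > 0"
    unfolding K_def using assms by simp
  have "eventually (\<lambda>n. 3 / K \<le> real (m n) / ln (real n)) sequentially"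
    using dense by (simp add: filterlim_at_top)
  moreover have "eventually (\<lambda>n. 0 < ln (real n)) sequentially"
    using filterlim_at_top_dense[THEN iffD1, OF ln_at_top[THEN filterlim_compose, OF filterlim_real_sequentially]]
    by blast
  ultimately show "eventually (\<lambda>n. norm (real n^2 * q^(m n)) \<le> exp (- ln (real n))) sequentially"
  proof eventually_elim
    case (elim n)
    then have "0 < real n"
      by (cases "n = 0") auto
    have "3 * ln (real n) \<le> real (m n) * K"
      using elim \<open>K > 0\<close> by (simp add: field_simps)
    have "real n^2 = exp (2 * ln (real n))"
      using exp_of_nat_mult[of 2 "ln (real n)"] \<open>0 < real n\<close> by simp
    moreover have "q^(m n) = exp (real (m n) * ln q)"
      using exp_of_nat_mult[of "m n" "ln q"] assms(1) by simp
    ultimately have "norm (real n^2 * q^(m n)) = exp (2 * ln (real n) + real (m n) * ln q)"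
      by (simp add: exp_add)
    also have "\<dots> \<le> exp (- ln (real n))"
      using \<open>3 * ln (real n) \<le> real (m n) * K\<close> by (simp add: K_def)
    finally show ?case .
  qed
  show "(\<lambda>n. exp (- ln (real n))) \<longlonglongrightarrow> 0"
    by real_asymp
qed

theorem not_weak_conv_std_edges_dense:
  fixes m :: "nat \<Rightarrow> nat" and p :: "nat \<Rightarrow> real"
  assumes "0 < \<epsilon>" and p: "\<And>n. \<epsilon> < p n \<and> p n < 1 - \<epsilon>"
    and "filterlim (\<lambda>n. real (m n) / ln (real n)) at_top sequentially"
  shows "\<not> weak_conv_m (\<lambda>n. std_edges_distr n (m n) (p n)) std_normal_distribution"
proof (rule not_weak_conv_m_cdf_dichotomy)
  have "\<epsilon>^2 < 1"
    using assms(1) p[of 0] by (simp add: power_less_one_iff)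
  then show "(\<lambda>n. real n^2 * (1 - \<epsilon>^2)^(m n)) \<longlonglongrightarrow> 0"
    using assms by (intro n_sq_mult_power_tendsto_0) simp_all
  show "1 - real n^2 * (1 - \<epsilon>^2)^(m n) \<le> cdf (std_edges_distr n (m n) (p n)) 0 \<or>
        cdf (std_edges_distr n (m n) (p n)) 0 \<le> real n^2 * (1 - \<epsilon>^2)^(m n)" for n
    unfolding std_edges_distr_def
  proof (rule cdf_map_pmf_dichotomy)
    let ?\<kappa> = "(real (card (pairs_below n)) - edges_mean n (m n) (p n)) / sqrt (edges_var n (m n) (p n))"
    have "0 \<le> p n" "p n \<le> 1" "\<epsilon>^2 \<le> (p n)^2"
      using assms(1) p[of n] by (auto intro: power_mono)
    then have "measure_pmf.prob (rig n (m n) (p n)) {S. num_edges n (m n) S \<noteq> card (pairs_below n)}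
               \<le> real n^2 * (1 - \<epsilon>^2)^(m n)"
      by (intro order.trans[OF prob_rig_incomplete_le] mult_left_mono power_mono) (auto simp: power_le_one)
    then show "measure_pmf.prob (rig n (m n) (p n))
                 {S. (real (num_edges n (m n) S) - edges_mean n (m n) (p n)) / sqrt (edges_var n (m n) (p n)) \<noteq> ?\<kappa>}
               \<le> real n^2 * (1 - \<epsilon>^2)^(m n)"
      by (rule order.trans[rotated]) (auto intro!: measure_pmf.finite_measure_mono)
  qed
qed (use cdf_std_normal_bounds isCont_cdf_std_normal in auto)

theorem proposition7p7:
  fixes \<epsilon> :: real and m :: "nat \<Rightarrow> nat" and p :: "nat \<Rightarrow> real"
  assumes "0 < \<epsilon>" and "\<epsilon> < 1/2"
    and "\<And>n. \<epsilon> < p n \<and> p n < 1 - \<epsilon>"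
    and "\<And>n. m n \<ge> 1"
  shows "(((\<lambda>n. real (m n) / ln (real n)) \<longlonglongrightarrow> 0) \<longrightarrow>
           weak_conv_m (\<lambda>n. std_edges_distr n (m n) (p n)) std_normal_distribution) \<and>
         (filterlim (\<lambda>n. real (m n) / ln (real n)) at_top sequentially \<longrightarrow>
           \<not> weak_conv_m (\<lambda>n. std_edges_distr n (m n) (p n)) std_normal_distribution)"
  using weak_conv_std_edges_sparse[where \<epsilon> = \<epsilon> and m = m and p = p]
    not_weak_conv_std_edges_dense[where \<epsilon> = \<epsilon> and m = m and p = p] assms
  by blast

end
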